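(* Let $I$ be a compact segment and let $G\subset \mathrm{Diff}^1_+(I)$ be a group. The following two properties are equivalent: (i) there is a path $(h_t)_{t\in[0,1)}$ of diffeomorphisms $h_t\in \mathrm{Diff}^1_+(I)$, continuous for the $C^1$-topology, such that for every $g\in G$, $h_t g h_t^{-1}$ tends to the identity in the $C^1$-topology as $t\to 1$; (ii) there is a sequence $(h_n)_{n\in\mathbb N}$ of diffeomorphisms $h_n\in \mathrm{Diff}^1_+(I)$ such that for every $g\in G$, $h_n g h_n^{-1}$ tends to the identity in the $C^1$-topology as $n\to+\infty$.
   Context: $\mathrm{Diff}^1_+(I)$ denotes the group of orientation preserving $C^1$-diffeomorphisms of the segment $I$, endowed with the $C^1$-topology. *)

theory Defs
  imports "HOL-Analysis.Analysis"
begin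

text \<open>Diffeomorphisms of the compact segment I = {a..b} (a < b) are represented by
  functions real => real; only their values on {a..b} matter.\<close>

definition dI :: "real \<Rightarrow> real \<Rightarrow> (real \<Rightarrow> real) \<Rightarrow> real \<Rightarrow> real" where
  "dI a b f x = (SOME d. (f has_real_derivative d) (at x within {a..b}))"

definition Diff1p :: "real \<Rightarrow> real \<Rightarrow> (real \<Rightarrow> real) set" where
  "Diff1p a b = {f. bij_betw f {a..b} {a..b} \<and> strict_mono_on {a..b} f
      \<and> (\<forall>x\<in>{a..b}. f differentiable (at x within {a..b}))
      \<and> continuous_on {a..b} (dI a b f)
      \<and> bij_betw (inv_into {a..b} f) {a..b} {a..b}
      \<and> (\<forall>x\<in>{a..b}. inv_into {a..b} f differentiable (at x within {a..b}))
      \<and> continuous_on {a..b} (dI a b (inv_into {a..b} f))}"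

definition c1dist :: "real \<Rightarrow> real \<Rightarrow> (real \<Rightarrow> real) \<Rightarrow> (real \<Rightarrow> real) \<Rightarrow> real" where
  "c1dist a b f g = (SUP x\<in>{a..b}. \<bar>f x - g x\<bar>) + (SUP x\<in>{a..b}. \<bar>dI a b f x - dI a b g x\<bar>)"

definition is_subgroup_Diff1p :: "real \<Rightarrow> real \<Rightarrow> (real \<Rightarrow> real) set \<Rightarrow> bool" where
  "is_subgroup_Diff1p a b G \<longleftrightarrow> G \<subseteq> Diff1p a b
     \<and> (\<exists>e\<in>G. \<forall>x\<in>{a..b}. e x = x)
     \<and> (\<forall>g\<in>G. \<forall>h\<in>G. \<exists>k\<in>G. \<forall>x\<in>{a..b}. k x = g (h x))
     \<and> (\<forall>g\<in>G. \<exists>k\<in>G. \<forall>x\<in>{a..b}. k x = inv_into {a..b} g x)"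

definition conjI :: "real \<Rightarrow> real \<Rightarrow> (real \<Rightarrow> real) \<Rightarrow> (real \<Rightarrow> real) \<Rightarrow> real \<Rightarrow> real" where
  "conjI a b h g = h \<circ> g \<circ> inv_into {a..b} h"

end

theory Submission
  imports Defs "HOL-Real_Asymp.Real_Asymp"
begin

text \<open>The implication (i) \<Longrightarrow> (ii) is restriction of the path to a sequence t_n \<rightarrow> 1.
  For the converse, reparametrise [0,1) onto [0,\<infinity>) by t \<mapsto> t/(1-t) and interpolate linearly
  between h_n and h_(n+1). A convex combination of orientation preserving C^1 diffeomorphisms
  is again one. The C^1 distance of h g h^-1 to the identity is controlled by a bound A on
  |h(g x) - h x| together with a bound B in |h'(g x) g'(x) - h'(x)| \<le> B h'(x); both bounds
  are linear in h, so on the segment between h_n and h_(n+1) the distance is at most the sum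
  of the distances at the two ends.\<close>

lemma dI_eqI:
  assumes "a < b" "x \<in> {a..b}" "(f has_real_derivative D) (at x within {a..b})"
  shows "dI a b f x = D"
proof -
  have nb: "at x within {a..b} \<noteq> bot" using assms by (simp add: trivial_limit_within)
  show ?thesis unfolding dI_def
    by (rule some_equality) (use assms nb has_field_derivative_unique in blast)+
qed

lemma has_real_derivative_dI:
  assumes "f differentiable (at x within {a..b})"
  shows "(f has_real_derivative dI a b f x) (at x within {a..b})"
  using assms unfolding dI_def real_differentiable_def by (rule someI_ex)

lemma dI_id: "a < b \<Longrightarrow> x \<in> {a..b} \<Longrightarrow> dI a b id x = 1"
  by (rule dI_eqI) (auto simp: id_def intro: DERIV_ident)

lemma strict_mono_on_deriv_nonneg:
  assumes "a < b" "x \<in> {a..b}" "strict_mono_on {a..b} f"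
    "(f has_real_derivative D) (at x within {a..b})"
  shows "0 \<le> D"
proof -
  have nb: "at x within {a..b} \<noteq> bot" using assms by (simp add: trivial_limit_within)
  have quot: "((\<lambda>y. (f y - f x) / (y - x)) \<longlongrightarrow> D) (at x within {a..b})"
    using assms(4) by (simp add: has_field_derivative_iff)
  have "eventually (\<lambda>y. y \<in> {a..b} \<and> y \<noteq> x) (at x within {a..b})"
    by (simp add: eventually_at_filter)
  then have "eventually (\<lambda>y. 0 \<le> (f y - f x) / (y - x)) (at x within {a..b})"
  proof (rule eventually_mono)
    fix y assume y: "y \<in> {a..b} \<and> y \<noteq> x"
    then consider "y < x" "f y < f x" | "x < y" "f x < f y"
      using assms(2,3) by (metis linorder_neqE_linordered_idom strict_mono_onD)
    then show "0 \<le> (f y - f x) / (y - x)"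
      by cases (simp_all add: divide_nonpos_neg less_imp_le)
  qed
  then show ?thesis using tendsto_lowerbound[OF quot _ nb] by blast
qed

lemma has_real_derivative_inv_into:
  assumes "continuous_on {a..b} f" "inj_on f {a..b}" "f ` {a..b} = {a..b}" "y \<in> {a..b}"
    "(f has_real_derivative D) (at (inv_into {a..b} f y) within {a..b})" "D \<noteq> 0"
  shows "(inv_into {a..b} f has_real_derivative inverse D) (at y within {a..b})"
proof -
  define g where "g = inv_into {a..b} f"
  define x where "x = g y"
  have x: "x \<in> {a..b}" "f x = y" using assms(3,4) unfolding x_def g_def
    by (metis inv_into_into, metis f_inv_into_f)
  have gf: "\<forall>z\<in>{a..b}. g (f z) = z" using assms(2) by (simp add: g_def inv_into_f_f)
  have fg: "\<And>z. z \<in> {a..b} \<Longrightarrow> f (g z) = z" using assms(3) unfolding g_def by (metis f_inv_into_f)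
  have g_in: "\<And>z. z \<in> {a..b} \<Longrightarrow> g z \<in> {a..b}" using assms(3) unfolding g_def by (metis inv_into_into)
  have "continuous_on {a..b} g"
    using continuous_on_inv[OF assms(1) compact_Icc gf] assms(3) by simp
  then have g_tendsto: "(g \<longlongrightarrow> g y) (at y within {a..b})"
    using assms(4) by (simp add: continuous_on_eq_continuous_within continuous_within)
  have ev: "eventually (\<lambda>z. z \<in> {a..b} \<and> z \<noteq> y) (at y within {a..b})"
    by (simp add: eventually_at_filter)
  have "eventually (\<lambda>z. g z \<in> {a..b} \<and> g z \<noteq> x) (at y within {a..b})"
    using ev by (rule eventually_mono) (metis fg g_in x(2))
  with g_tendsto have g_lim: "filterlim g (at x within {a..b}) (at y within {a..b})"
    by (simp add: filterlim_at x_def)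
  have "((\<lambda>w. (f w - f x) / (w - x)) \<longlongrightarrow> D) (at x within {a..b})"
    using assms(5) by (simp add: has_field_derivative_iff x_def g_def)
  from filterlim_compose[OF this g_lim]
  have "((\<lambda>z. inverse ((f (g z) - f x) / (g z - x))) \<longlongrightarrow> inverse D) (at y within {a..b})"
    using assms(6) by (simp add: o_def tendsto_inverse del: inverse_divide)
  then have "((\<lambda>z. (g z - g y) / (z - y)) \<longlongrightarrow> inverse D) (at y within {a..b})"
  proof (rule Lim_transform_eventually)
    show "eventually (\<lambda>z. inverse ((f (g z) - f x) / (g z - x)) = (g z - g y) / (z - y)) (at y within {a..b})"
      using ev
    proof (rule eventually_mono)
      fix z assume "z \<in> {a..b} \<and> z \<noteq> y"
      then have "f (g z) = z" using fg by blast
      then have "inverse ((f (g z) - f x) / (g z - x)) = (g z - x) / (z - y)"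
        using x(2) by (simp add: inverse_divide)
      then show "inverse ((f (g z) - f x) / (g z - x)) = (g z - g y) / (z - y)"
        by (simp add: x_def)
    qed
  qed
  then show ?thesis unfolding g_def[symmetric] by (simp add: has_field_derivative_iff)
qed

lemma Diff1pD:
  assumes "h \<in> Diff1p a b"
  shows "strict_mono_on {a..b} h"
    "\<And>x. x \<in> {a..b} \<Longrightarrow> h differentiable (at x within {a..b})"
    "continuous_on {a..b} (dI a b h)"
    "\<And>x. x \<in> {a..b} \<Longrightarrow> inv_into {a..b} h differentiable (at x within {a..b})"
    "continuous_on {a..b} (dI a b (inv_into {a..b} h))"
    "h ` {a..b} = {a..b}"
    "\<And>x. x \<in> {a..b} \<Longrightarrow> h x \<in> {a..b}"
    "\<And>x. x \<in> {a..b} \<Longrightarrow> inv_into {a..b} h (h x) = x"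
    "\<And>x. x \<in> {a..b} \<Longrightarrow> h (inv_into {a..b} h x) = x"
    "\<And>x. x \<in> {a..b} \<Longrightarrow> inv_into {a..b} h x \<in> {a..b}"
    "continuous_on {a..b} h"
    "bij_betw (inv_into {a..b} h) {a..b} {a..b}"
proof -
  have bij: "bij_betw h {a..b} {a..b}" and diff: "\<And>x. x \<in> {a..b} \<Longrightarrow> h differentiable (at x within {a..b})"
    using assms unfolding Diff1p_def by blast+
  then have im: "h ` {a..b} = {a..b}" and inj: "inj_on h {a..b}" by (simp_all add: bij_betw_def)
  show "strict_mono_on {a..b} h" "continuous_on {a..b} (dI a b h)"
    "\<And>x. x \<in> {a..b} \<Longrightarrow> inv_into {a..b} h differentiable (at x within {a..b})"
    "continuous_on {a..b} (dI a b (inv_into {a..b} h))"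
    using assms unfolding Diff1p_def by blast+
  show "\<And>x. x \<in> {a..b} \<Longrightarrow> h differentiable (at x within {a..b})" by (fact diff)
  show "h ` {a..b} = {a..b}" by (fact im)
  show "\<And>x. x \<in> {a..b} \<Longrightarrow> h x \<in> {a..b}" using im by blast
  show "\<And>x. x \<in> {a..b} \<Longrightarrow> inv_into {a..b} h (h x) = x" using inj by (rule inv_into_f_f)
  show "\<And>x. x \<in> {a..b} \<Longrightarrow> h (inv_into {a..b} h x) = x" using im by (metis f_inv_into_f)
  show "\<And>x. x \<in> {a..b} \<Longrightarrow> inv_into {a..b} h x \<in> {a..b}" using im by (metis inv_into_into)
  show "bij_betw (inv_into {a..b} h) {a..b} {a..b}" using bij by (rule bij_betw_inv_into)
  show "continuous_on {a..b} h"
    using diff by (metis continuous_on_eq_continuous_within differentiable_imp_continuous_within)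
qed

lemma Diff1p_fixes_endpoints:
  assumes "a < b" "h \<in> Diff1p a b"
  shows "h a = a" "h b = b"
proof -
  note D = Diff1pD[OF assms(2)]
  have ab: "a \<in> {a..b}" "b \<in> {a..b}" using assms(1) by auto
  obtain x y where "x \<in> {a..b}" "h x = a" "y \<in> {a..b}" "h y = b" using D(6) ab by (metis imageE)
  then have "h a \<le> a" "b \<le> h b" using strict_mono_on_leD[OF D(1)] ab by (metis atLeastAtMost_iff)+
  then show "h a = a" "h b = b" using D(7)[OF ab(1)] D(7)[OF ab(2)] by auto
qed

lemma Diff1p_dI:
  assumes "a < b" "h \<in> Diff1p a b" "x \<in> {a..b}"
  shows "0 < dI a b h x" "dI a b (inv_into {a..b} h) (h x) = 1 / dI a b h x"
proof -
  note D = Diff1pD[OF assms(2)]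
  define g where "g = inv_into {a..b} h"
  have "(g has_real_derivative dI a b g (h x)) (at (h x) within h ` {a..b})"
    unfolding D(6) g_def using D(4)[OF D(7)[OF assms(3)]] by (rule has_real_derivative_dI)
  moreover have dh: "(h has_real_derivative dI a b h x) (at x within {a..b})"
    using D(2)[OF assms(3)] by (rule has_real_derivative_dI)
  ultimately have "(g \<circ> h has_real_derivative dI a b g (h x) * dI a b h x) (at x within {a..b})"
    by (rule DERIV_image_chain)
  then have "((\<lambda>y. y) has_real_derivative dI a b g (h x) * dI a b h x) (at x within {a..b})"
    by (rule has_field_derivative_transform_within[OF _ zero_less_one assms(3)])
       (use D(8) in \<open>auto simp: g_def\<close>)
  moreover have "at x within {a..b} \<noteq> bot" using assms by (simp add: trivial_limit_within)
  ultimately have prod: "dI a b g (h x) * dI a b h x = 1"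
    using has_field_derivative_unique DERIV_ident by blast
  moreover have "0 \<le> dI a b h x" using strict_mono_on_deriv_nonneg[OF assms(1,3) D(1) dh] .
  ultimately show pos: "0 < dI a b h x"
    by (metis less_eq_real_def mult_zero_right zero_neq_one)
  show "dI a b (inv_into {a..b} h) (h x) = 1 / dI a b h x"
    using prod pos by (simp add: g_def field_simps)
qed

lemma Diff1pI:
  assumes "a < b" "strict_mono_on {a..b} f" "f a = a" "f b = b"
    and deriv: "\<And>x. x \<in> {a..b} \<Longrightarrow> (f has_real_derivative f' x) (at x within {a..b})"
    and pos: "\<And>x. x \<in> {a..b} \<Longrightarrow> 0 < f' x"
    and "continuous_on {a..b} f'"
  shows "f \<in> Diff1p a b"
proof -
  have cont: "continuous_on {a..b} f"
    using deriv by (meson continuous_on_eq_continuous_within DERIV_continuous)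
  have dI_f: "dI a b f x = f' x" if "x \<in> {a..b}" for x using dI_eqI[OF assms(1) that deriv[OF that]] .
  have "f ` {a..b} \<subseteq> {a..b}"
  proof (rule image_subsetI)
    fix x assume "x \<in> {a..b}"
    then have "f a \<le> f x" "f x \<le> f b" using strict_mono_on_leD[OF assms(2)] assms(1) by auto
    then show "f x \<in> {a..b}" using assms(3,4) by simp
  qed
  moreover have "{a..b} \<subseteq> f ` {a..b}"
    using IVT'[of f a _ b] cont assms(1,3,4) by fastforce
  ultimately have im: "f ` {a..b} = {a..b}" by blast
  have inj: "inj_on f {a..b}" by (rule strict_mono_on_imp_inj_on[OF assms(2)])
  have bij: "bij_betw f {a..b} {a..b}" using inj im by (simp add: bij_betw_def)
  define g where "g = inv_into {a..b} f"
  have g_in: "\<And>y. y \<in> {a..b} \<Longrightarrow> g y \<in> {a..b}" unfolding g_def using im by (metis inv_into_into)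
  have dg: "(g has_real_derivative inverse (f' (g y))) (at y within {a..b})" if "y \<in> {a..b}" for y
    unfolding g_def
    by (rule has_real_derivative_inv_into[OF cont inj im that])
       (use deriv g_in[OF that] pos[OF g_in[OF that]] g_def in auto)
  have "continuous_on {a..b} g"
    using continuous_on_inv[OF cont compact_Icc] inj im by (simp add: g_def inv_into_f_f)
  then have "continuous_on {a..b} (\<lambda>y. inverse (f' (g y)))"
    using g_in pos by (intro continuous_on_inverse continuous_on_compose2[OF assms(7)]) force+
  then have "continuous_on {a..b} (dI a b g)"
    by (rule continuous_on_eq) (metis dI_eqI[OF assms(1) _ dg])
  moreover have "continuous_on {a..b} (dI a b f)"
    using assms(7) dI_f by (metis continuous_on_eq)
  moreover have "f differentiable (at x within {a..b})" "g differentiable (at x within {a..b})"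
    if "x \<in> {a..b}" for x
    using deriv[OF that] dg[OF that] by (auto simp: real_differentiable_def)
  ultimately show ?thesis
    unfolding Diff1p_def using bij bij_betw_inv_into[OF bij] assms(2) by (auto simp: g_def)
qed

lemma convex_comb_pos:
  fixes p q s :: real
  assumes "0 < p" "0 < q" "0 \<le> s" "s \<le> 1"
  shows "0 < (1 - s) * p + s * q"
  using assms by (cases "s = 1") (auto intro!: add_pos_nonneg)

lemma abs_convex_comb_le:
  fixes s u v U V :: real
  assumes "0 \<le> s" "s \<le> 1" "\<bar>u\<bar> \<le> U" "\<bar>v\<bar> \<le> V"
  shows "\<bar>(1 - s) * u + s * v\<bar> \<le> (1 - s) * U + s * V"
proof -
  have "\<bar>(1 - s) * u + s * v\<bar> \<le> (1 - s) * \<bar>u\<bar> + s * \<bar>v\<bar>"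
    using assms(1,2) by (metis abs_mult abs_of_nonneg abs_triangle_ineq diff_ge_0_iff_ge)
  also have "\<dots> \<le> (1 - s) * U + s * V" using assms by (intro add_mono mult_left_mono) auto
  finally show ?thesis .
qed

lemma has_real_derivative_convex_comb:
  assumes "P \<in> Diff1p a b" "Q \<in> Diff1p a b" "x \<in> {a..b}"
  shows "((\<lambda>x. (1 - s) * P x + s * Q x) has_real_derivative (1 - s) * dI a b P x + s * dI a b Q x)
           (at x within {a..b})"
  by (intro DERIV_add DERIV_cmult has_real_derivative_dI Diff1pD(2)[OF assms(1,3)] Diff1pD(2)[OF assms(2,3)])

lemma dI_convex_comb:
  assumes "a < b" "P \<in> Diff1p a b" "Q \<in> Diff1p a b" "x \<in> {a..b}"
  shows "dI a b (\<lambda>x. (1 - s) * P x + s * Q x) x = (1 - s) * dI a b P x + s * dI a b Q x"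
  using dI_eqI[OF assms(1,4) has_real_derivative_convex_comb[OF assms(2-4)]] .

lemma convex_comb_Diff1p:
  assumes "a < b" "P \<in> Diff1p a b" "Q \<in> Diff1p a b" "0 \<le> s" "s \<le> 1"
  shows "(\<lambda>x. (1 - s) * P x + s * Q x) \<in> Diff1p a b"
proof (rule Diff1pI[OF assms(1) _ _ _ has_real_derivative_convex_comb[OF assms(2,3)]])
  show "strict_mono_on {a..b} (\<lambda>x. (1 - s) * P x + s * Q x)"
  proof (rule strict_mono_onI)
    fix x y assume "x \<in> {a..b}" "y \<in> {a..b}" "x < y"
    then have "0 < P y - P x" "0 < Q y - Q x"
      using Diff1pD(1)[OF assms(2)] Diff1pD(1)[OF assms(3)] by (simp_all add: strict_mono_onD)
    from convex_comb_pos[OF this assms(4,5)]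
    show "(1 - s) * P x + s * Q x < (1 - s) * P y + s * Q y" by (simp add: algebra_simps)
  qed
  show "(1 - s) * P a + s * Q a = a" "(1 - s) * P b + s * Q b = b"
    using Diff1p_fixes_endpoints[OF assms(1,2)] Diff1p_fixes_endpoints[OF assms(1,3)]
    by (simp_all add: algebra_simps)
  show "0 < (1 - s) * dI a b P x + s * dI a b Q x" if "x \<in> {a..b}" for x
    using convex_comb_pos Diff1p_dI(1)[OF assms(1,2) that] Diff1p_dI(1)[OF assms(1,3) that] assms(4,5)
    by blast
  show "continuous_on {a..b} (\<lambda>x. (1 - s) * dI a b P x + s * dI a b Q x)"
    by (intro continuous_intros Diff1pD(3)[OF assms(2)] Diff1pD(3)[OF assms(3)])
qed

lemma conjI_apply:
  assumes "h \<in> Diff1p a b" "x \<in> {a..b}"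
  shows "conjI a b h g (h x) = h (g x)"
  unfolding conjI_def using Diff1pD(8)[OF assms] by simp

lemma dI_conjI:
  assumes "a < b" "h \<in> Diff1p a b" "g \<in> Diff1p a b" "x \<in> {a..b}"
  shows "dI a b (conjI a b h g) (h x) = dI a b h (g x) * dI a b g x / dI a b h x"
proof -
  note Dh = Diff1pD[OF assms(2)] and Dg = Diff1pD[OF assms(3)]
  define hi where "hi = inv_into {a..b} h"
  have hx: "h x \<in> {a..b}" and gx: "g x \<in> {a..b}" using Dh(7) Dg(7) assms(4) by auto
  have hi_im: "hi ` {a..b} = {a..b}"
    using Dh(12) unfolding hi_def by (rule bij_betw_imp_surj_on)
  have "(hi has_real_derivative 1 / dI a b h x) (at (h x) within {a..b})"
    using has_real_derivative_dI[OF Dh(4)[OF hx]] Diff1p_dI(2)[OF assms(1,2,4)] by (simp add: hi_def)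
  moreover have "(g has_real_derivative dI a b g x) (at (hi (h x)) within hi ` {a..b})"
    unfolding hi_im using has_real_derivative_dI[OF Dg(2)[OF assms(4)]] Dh(8)[OF assms(4)]
    by (simp add: hi_def)
  ultimately have "(g \<circ> hi has_real_derivative dI a b g x * (1 / dI a b h x)) (at (h x) within {a..b})"
    by (rule DERIV_image_chain[rotated])
  moreover have "(h has_real_derivative dI a b h (g x))
      (at ((g \<circ> hi) (h x)) within (g \<circ> hi) ` {a..b})"
    unfolding image_comp[symmetric] hi_im Dg(6)
    using has_real_derivative_dI[OF Dh(2)[OF gx]] Dh(8)[OF assms(4)] by (simp add: hi_def)
  ultimately have "(h \<circ> (g \<circ> hi) has_real_derivative dI a b h (g x) * (dI a b g x * (1 / dI a b h x)))
      (at (h x) within {a..b})"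
    by (rule DERIV_image_chain[rotated])
  then show ?thesis
    by (intro dI_eqI[OF assms(1) hx]) (simp add: conjI_def hi_def o_assoc)
qed

lemma continuous_on_Icc_abs_bounded:
  fixes f :: "real \<Rightarrow> real"
  assumes "continuous_on {a..b} f"
  obtains M where "\<And>x. x \<in> {a..b} \<Longrightarrow> \<bar>f x\<bar> \<le> M"
  using compact_imp_bounded[OF compact_continuous_image[OF assms compact_Icc]]
  unfolding bounded_iff real_norm_def by (meson imageI)

lemma c1dist_le:
  assumes "a \<le> b" "\<forall>y\<in>{a..b}. \<bar>f y - g y\<bar> \<le> A" "\<forall>y\<in>{a..b}. \<bar>dI a b f y - dI a b g y\<bar> \<le> B"
  shows "0 \<le> c1dist a b f g" "c1dist a b f g \<le> A + B"
proof -
  have bdd0: "bdd_above ((\<lambda>y. \<bar>f y - g y\<bar>) ` {a..b})" using assms(2) by (intro bdd_aboveI2) auto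
  have bdd1: "bdd_above ((\<lambda>y. \<bar>dI a b f y - dI a b g y\<bar>) ` {a..b})" using assms(3) by (intro bdd_aboveI2) auto
  have a: "a \<in> {a..b}" using assms by auto
  have "0 \<le> (SUP y\<in>{a..b}. \<bar>f y - g y\<bar>)"
    by (rule order_trans[OF abs_ge_zero cSUP_upper[OF a bdd0]])
  moreover have "0 \<le> (SUP y\<in>{a..b}. \<bar>dI a b f y - dI a b g y\<bar>)"
    by (rule order_trans[OF abs_ge_zero cSUP_upper[OF a bdd1]])
  ultimately show "0 \<le> c1dist a b f g" by (simp add: c1dist_def)
  have "(SUP y\<in>{a..b}. \<bar>f y - g y\<bar>) \<le> A" using a assms(2) by (intro cSUP_least) auto
  moreover have "(SUP y\<in>{a..b}. \<bar>dI a b f y - dI a b g y\<bar>) \<le> B" using a assms(3) by (intro cSUP_least) auto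
  ultimately show "c1dist a b f g \<le> A + B" by (simp add: c1dist_def)
qed

text \<open>The derivative bound is that of the conjugate at the point h x, multiplied by h'(x) > 0 so
  that it becomes linear in h.\<close>

definition conj_estimate ::
    "real \<Rightarrow> real \<Rightarrow> (real \<Rightarrow> real) \<Rightarrow> (real \<Rightarrow> real) \<Rightarrow> real \<Rightarrow> real \<Rightarrow> bool" where
  "conj_estimate a b h g A B \<longleftrightarrow> (\<forall>x\<in>{a..b}. \<bar>h (g x) - h x\<bar> \<le> A
      \<and> \<bar>dI a b h (g x) * dI a b g x - dI a b h x\<bar> \<le> B * dI a b h x)"

lemma c1dist_conjI_le:
  assumes "a < b" "h \<in> Diff1p a b" "g \<in> Diff1p a b" "conj_estimate a b h g A B"
  shows "0 \<le> c1dist a b (conjI a b h g) id" "c1dist a b (conjI a b h g) id \<le> A + B"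
proof -
  have "\<bar>conjI a b h g y - id y\<bar> \<le> A \<and> \<bar>dI a b (conjI a b h g) y - dI a b id y\<bar> \<le> B"
    if y: "y \<in> {a..b}" for y
  proof -
    obtain x where x: "x \<in> {a..b}" "y = h x" using Diff1pD(6)[OF assms(2)] y by blast
    have pos: "0 < dI a b h x" by (rule Diff1p_dI(1)[OF assms(1,2) x(1)])
    have est: "\<bar>h (g x) - h x\<bar> \<le> A" "\<bar>dI a b h (g x) * dI a b g x - dI a b h x\<bar> \<le> B * dI a b h x"
      using assms(4) x(1) by (auto simp: conj_estimate_def)
    have "dI a b (conjI a b h g) y - dI a b id y
        = (dI a b h (g x) * dI a b g x - dI a b h x) / dI a b h x"
      using dI_conjI[OF assms(1-3) x(1)] dI_id[OF assms(1) y] x(2) pos by (simp add: field_simps)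
    moreover have "\<bar>(dI a b h (g x) * dI a b g x - dI a b h x) / dI a b h x\<bar> \<le> B"
      using est(2) pos by (metis abs_div_pos pos_divide_le_eq)
    ultimately show ?thesis
      using est(1) conjI_apply[OF assms(2) x(1)] x(2) by simp
  qed
  then show "0 \<le> c1dist a b (conjI a b h g) id" "c1dist a b (conjI a b h g) id \<le> A + B"
    using c1dist_le[of a b "conjI a b h g" id A B] assms(1) by auto
qed

lemma dI_conjI_bounded:
  assumes "a < b" "h \<in> Diff1p a b" "g \<in> Diff1p a b"
  obtains M where "\<And>y. y \<in> {a..b} \<Longrightarrow> \<bar>dI a b (conjI a b h g) y\<bar> \<le> M"
proof -
  note Dh = Diff1pD[OF assms(2)] and Dg = Diff1pD[OF assms(3)]
  obtain M1 where M1: "\<And>x. x \<in> {a..b} \<Longrightarrow> \<bar>dI a b h x\<bar> \<le> M1"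
    using continuous_on_Icc_abs_bounded[OF Dh(3)] by blast
  obtain M2 where M2: "\<And>x. x \<in> {a..b} \<Longrightarrow> \<bar>dI a b g x\<bar> \<le> M2"
    using continuous_on_Icc_abs_bounded[OF Dg(3)] by blast
  obtain M3 where M3: "\<And>x. x \<in> {a..b} \<Longrightarrow> \<bar>dI a b (inv_into {a..b} h) x\<bar> \<le> M3"
    using continuous_on_Icc_abs_bounded[OF Dh(5)] by blast
  have M_nonneg: "0 \<le> M1" "0 \<le> M2"
    using M1[of a] M2[of a] assms(1) by (auto intro: order_trans[OF abs_ge_zero])
  show thesis
  proof (rule that[of "M1 * M2 * M3"])
    fix y assume y: "y \<in> {a..b}"
    define x where "x = inv_into {a..b} h y"
    have x: "x \<in> {a..b}" "h x = y" using Dh(9,10) y by (auto simp: x_def)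
    have "dI a b (conjI a b h g) y = dI a b h (g x) * dI a b g x * dI a b (inv_into {a..b} h) y"
      using dI_conjI[OF assms x(1)] Diff1p_dI(2)[OF assms(1,2) x(1)] x(2) by simp
    also have "\<bar>\<dots>\<bar> \<le> M1 * M2 * M3"
      unfolding abs_mult using M1 M2 M3 Dg(7) x(1) y M_nonneg by (intro mult_mono) auto
    finally show "\<bar>dI a b (conjI a b h g) y\<bar> \<le> M1 * M2 * M3" .
  qed
qed

lemma conj_estimate_c1dist:
  assumes "a < b" "h \<in> Diff1p a b" "g \<in> Diff1p a b"
  obtains A B where "c1dist a b (conjI a b h g) id = A + B" "conj_estimate a b h g A B"
proof -
  note Dh = Diff1pD[OF assms(2)] and Dg = Diff1pD[OF assms(3)]
  define k where "k = conjI a b h g"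
  define A where "A = (SUP y\<in>{a..b}. \<bar>k y - id y\<bar>)"
  define B where "B = (SUP y\<in>{a..b}. \<bar>dI a b k y - dI a b id y\<bar>)"
  have k_in: "k y \<in> {a..b}" if "y \<in> {a..b}" for y
    unfolding k_def conjI_def using Dh(7,10) Dg(7) that by simp
  have bddA: "bdd_above ((\<lambda>y. \<bar>k y - id y\<bar>) ` {a..b})"
    by (rule bdd_aboveI2[where M="b - a"]) (use k_in in fastforce)
  obtain M where M: "\<And>y. y \<in> {a..b} \<Longrightarrow> \<bar>dI a b k y\<bar> \<le> M"
    unfolding k_def using dI_conjI_bounded[OF assms] by blast
  have bddB: "bdd_above ((\<lambda>y. \<bar>dI a b k y - dI a b id y\<bar>) ` {a..b})"
    by (rule bdd_aboveI2[where M="M + 1"]) (use M dI_id[OF assms(1)] in fastforce)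
  show thesis
  proof (rule that[of A B])
    show "c1dist a b (conjI a b h g) id = A + B" by (simp add: c1dist_def A_def B_def k_def)
    show "conj_estimate a b h g A B"
      unfolding conj_estimate_def
    proof
      fix x assume x: "x \<in> {a..b}"
      have hx: "h x \<in> {a..b}" using Dh(7) x .
      have pos: "0 < dI a b h x" by (rule Diff1p_dI(1)[OF assms(1,2) x])
      have "\<bar>k (h x) - id (h x)\<bar> \<le> A" unfolding A_def by (rule cSUP_upper[OF hx bddA])
      then have C0: "\<bar>h (g x) - h x\<bar> \<le> A" using conjI_apply[OF assms(2) x] by (simp add: k_def)
      have "\<bar>dI a b k (h x) - dI a b id (h x)\<bar> \<le> B" unfolding B_def by (rule cSUP_upper[OF hx bddB])
      then have "\<bar>(dI a b h (g x) * dI a b g x - dI a b h x) / dI a b h x\<bar> \<le> B"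
        using dI_conjI[OF assms x] dI_id[OF assms(1) hx] pos by (simp add: k_def diff_divide_distrib)
      then have C1: "\<bar>dI a b h (g x) * dI a b g x - dI a b h x\<bar> \<le> B * dI a b h x"
        using pos by (metis abs_div_pos pos_divide_le_eq)
      show "\<bar>h (g x) - h x\<bar> \<le> A \<and> \<bar>dI a b h (g x) * dI a b g x - dI a b h x\<bar> \<le> B * dI a b h x"
        using C0 C1 by blast
    qed
  qed
qed

lemma conj_estimate_convex_comb:
  assumes "a < b" "P \<in> Diff1p a b" "Q \<in> Diff1p a b" "g \<in> Diff1p a b" "0 \<le> s" "s \<le> 1"
    and P: "conj_estimate a b P g AP BP" and Q: "conj_estimate a b Q g AQ BQ"
  shows "conj_estimate a b (\<lambda>x. (1 - s) * P x + s * Q x) g (AP + AQ) (BP + BQ)"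
  unfolding conj_estimate_def
proof
  fix x assume x: "x \<in> {a..b}"
  have P0: "\<bar>P (g x) - P x\<bar> \<le> AP" and Q0: "\<bar>Q (g x) - Q x\<bar> \<le> AQ"
    and P1: "\<bar>dI a b P (g x) * dI a b g x - dI a b P x\<bar> \<le> BP * dI a b P x"
    and Q1: "\<bar>dI a b Q (g x) * dI a b g x - dI a b Q x\<bar> \<le> BQ * dI a b Q x"
    using P Q x by (auto simp: conj_estimate_def)
  have a: "a \<in> {a..b}" using assms(1) by simp
  have P'_pos: "0 < dI a b P x" and Q'_pos: "0 < dI a b Q x"
    using Diff1p_dI(1)[OF assms(1,2) x] Diff1p_dI(1)[OF assms(1,3) x] .
  have "0 \<le> AP" "0 \<le> AQ"
    using P Q a by (auto simp: conj_estimate_def intro: order_trans[OF abs_ge_zero])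
  have "0 \<le> BP * dI a b P x" "0 \<le> BQ * dI a b Q x" using P1 Q1 by (auto intro: order_trans[OF abs_ge_zero])
  then have "0 \<le> BP" "0 \<le> BQ" using P'_pos Q'_pos by (simp_all add: zero_le_mult_iff)
  have "\<bar>(1 - s) * (P (g x) - P x) + s * (Q (g x) - Q x)\<bar> \<le> (1 - s) * AP + s * AQ"
    by (rule abs_convex_comb_le[OF assms(5,6) P0 Q0])
  also have "\<dots> \<le> AP + AQ"
    using assms(5,6) \<open>0 \<le> AP\<close> \<open>0 \<le> AQ\<close> by (smt (verit) mult_left_le_one_le)
  finally have C0: "\<bar>(1 - s) * P (g x) + s * Q (g x) - ((1 - s) * P x + s * Q x)\<bar> \<le> AP + AQ"
    by (simp add: algebra_simps)
  have "\<bar>(1 - s) * (dI a b P (g x) * dI a b g x - dI a b P x)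
          + s * (dI a b Q (g x) * dI a b g x - dI a b Q x)\<bar>
      \<le> (1 - s) * (BP * dI a b P x) + s * (BQ * dI a b Q x)"
    by (rule abs_convex_comb_le[OF assms(5,6) P1 Q1])
  also have "\<dots> \<le> (BP + BQ) * ((1 - s) * dI a b P x + s * dI a b Q x)"
  proof -
    have "0 \<le> (1 - s) * (BQ * dI a b P x) + s * (BP * dI a b Q x)"
      using assms(5,6) \<open>0 \<le> BP\<close> \<open>0 \<le> BQ\<close> P'_pos Q'_pos by simp
    then show ?thesis by (simp add: algebra_simps)
  qed
  finally have C1: "\<bar>(1 - s) * (dI a b P (g x) * dI a b g x - dI a b P x)
          + s * (dI a b Q (g x) * dI a b g x - dI a b Q x)\<bar>
      \<le> (BP + BQ) * ((1 - s) * dI a b P x + s * dI a b Q x)" .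
  have gx: "g x \<in> {a..b}" using Diff1pD(7)[OF assms(4) x] .
  show "\<bar>(1 - s) * P (g x) + s * Q (g x) - ((1 - s) * P x + s * Q x)\<bar> \<le> AP + AQ \<and>
      \<bar>dI a b (\<lambda>x. (1 - s) * P x + s * Q x) (g x) * dI a b g x - dI a b (\<lambda>x. (1 - s) * P x + s * Q x) x\<bar>
        \<le> (BP + BQ) * dI a b (\<lambda>x. (1 - s) * P x + s * Q x) x"
    unfolding dI_convex_comb[OF assms(1-3) x] dI_convex_comb[OF assms(1-3) gx]
    using C0 C1 by (simp add: algebra_simps)
qed

lemma c1dist_conjI_convex_comb_le:
  assumes "a < b" "P \<in> Diff1p a b" "Q \<in> Diff1p a b" "g \<in> Diff1p a b" "0 \<le> s" "s \<le> 1"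
  shows "0 \<le> c1dist a b (conjI a b (\<lambda>x. (1 - s) * P x + s * Q x) g) id"
    "c1dist a b (conjI a b (\<lambda>x. (1 - s) * P x + s * Q x) g) id
       \<le> c1dist a b (conjI a b P g) id + c1dist a b (conjI a b Q g) id"
proof -
  obtain AP BP where "c1dist a b (conjI a b P g) id = AP + BP" "conj_estimate a b P g AP BP"
    using conj_estimate_c1dist[OF assms(1,2,4)] .
  moreover obtain AQ BQ where "c1dist a b (conjI a b Q g) id = AQ + BQ" "conj_estimate a b Q g AQ BQ"
    using conj_estimate_c1dist[OF assms(1,3,4)] .
  ultimately have "conj_estimate a b (\<lambda>x. (1 - s) * P x + s * Q x) g (AP + AQ) (BP + BQ)"
    and dist_sum: "c1dist a b (conjI a b P g) id + c1dist a b (conjI a b Q g) id = (AP + AQ) + (BP + BQ)"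
    using conj_estimate_convex_comb[OF assms] by auto
  from c1dist_conjI_le[OF assms(1) convex_comb_Diff1p[OF assms(1-3,5,6)] assms(4) this(1)] dist_sum
  show "0 \<le> c1dist a b (conjI a b (\<lambda>x. (1 - s) * P x + s * Q x) g) id"
    "c1dist a b (conjI a b (\<lambda>x. (1 - s) * P x + s * Q x) g) id
       \<le> c1dist a b (conjI a b P g) id + c1dist a b (conjI a b Q g) id"
    by simp_all
qed

definition lin_interp :: "(nat \<Rightarrow> real \<Rightarrow> real) \<Rightarrow> nat \<Rightarrow> real \<Rightarrow> real \<Rightarrow> real" where
  "lin_interp H i s = (\<lambda>x. (1 - s) * H i x + s * H (Suc i) x)"

definition pl_path :: "(nat \<Rightarrow> real \<Rightarrow> real) \<Rightarrow> real \<Rightarrow> real \<Rightarrow> real" where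
  "pl_path H v = lin_interp H (nat \<lfloor>v\<rfloor>) (v - of_int \<lfloor>v\<rfloor>)"

lemma pl_path_on_piece:
  assumes "real i \<le> v" "v \<le> real i + 1"
  shows "pl_path H v = lin_interp H i (v - real i)"
proof (cases "v < real i + 1")
  case True
  then have "\<lfloor>v\<rfloor> = int i" using assms(1) by (simp add: floor_eq_iff)
  then show ?thesis by (simp add: pl_path_def)
next
  case False
  then have v: "v = real i + 1" using assms(2) by simp
  then have "\<lfloor>v\<rfloor> = int i + 1" by simp
  then have "nat \<lfloor>v\<rfloor> = Suc i" by simp
  then show ?thesis using v \<open>\<lfloor>v\<rfloor> = int i + 1\<close> by (simp add: pl_path_def lin_interp_def)
qed

lemma nat_floor_piece:
  fixes v :: real
  assumes "0 \<le> v"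
  shows "real (nat \<lfloor>v\<rfloor>) \<le> v" "v \<le> real (nat \<lfloor>v\<rfloor>) + 1"
  using assms by linarith+

lemma pl_path_Diff1p:
  assumes "a < b" "\<And>n. H n \<in> Diff1p a b" "0 \<le> v"
  shows "pl_path H v \<in> Diff1p a b"
proof -
  define i where "i = nat \<lfloor>v\<rfloor>"
  have "real i \<le> v" "v \<le> real i + 1" using nat_floor_piece[OF assms(3)] by (simp_all add: i_def)
  with convex_comb_Diff1p[OF assms(1) assms(2) assms(2), of "v - real i"] pl_path_on_piece
  show ?thesis by (simp add: lin_interp_def)
qed

lemma c1dist_conjI_pl_path_le:
  assumes "a < b" "\<And>n. H n \<in> Diff1p a b" "g \<in> Diff1p a b" "0 \<le> v"
  shows "0 \<le> c1dist a b (conjI a b (pl_path H v) g) id"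
    "c1dist a b (conjI a b (pl_path H v) g) id \<le> c1dist a b (conjI a b (H (nat \<lfloor>v\<rfloor>)) g) id
        + c1dist a b (conjI a b (H (Suc (nat \<lfloor>v\<rfloor>))) g) id"
proof -
  define i where "i = nat \<lfloor>v\<rfloor>"
  have "real i \<le> v" "v \<le> real i + 1" using nat_floor_piece[OF assms(4)] by (simp_all add: i_def)
  with c1dist_conjI_convex_comb_le[OF assms(1) assms(2) assms(2) assms(3), of "v - real i"] pl_path_on_piece
  show "0 \<le> c1dist a b (conjI a b (pl_path H v) g) id"
    "c1dist a b (conjI a b (pl_path H v) g) id \<le> c1dist a b (conjI a b (H (nat \<lfloor>v\<rfloor>)) g) id
        + c1dist a b (conjI a b (H (Suc (nat \<lfloor>v\<rfloor>))) g) id"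
    by (simp_all add: lin_interp_def flip: i_def)
qed

lemma c1dist_lin_interp_le:
  assumes "a < b" "\<And>n. H n \<in> Diff1p a b"
  obtains M where "\<And>s t. 0 \<le> c1dist a b (lin_interp H i s) (lin_interp H i t)
     \<and> c1dist a b (lin_interp H i s) (lin_interp H i t) \<le> M * \<bar>s - t\<bar>"
proof -
  note D0 = Diff1pD[OF assms(2)[of i]] and D1 = Diff1pD[OF assms(2)[of "Suc i"]]
  obtain C where C: "\<And>x. x \<in> {a..b} \<Longrightarrow> \<bar>H (Suc i) x - H i x\<bar> \<le> C"
    using continuous_on_Icc_abs_bounded[of a b "\<lambda>x. H (Suc i) x - H i x"] D0(11) D1(11)
    by (auto intro: continuous_intros)
  obtain C' where C': "\<And>x. x \<in> {a..b} \<Longrightarrow> \<bar>dI a b (H (Suc i)) x - dI a b (H i) x\<bar> \<le> C'"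
    using continuous_on_Icc_abs_bounded[of a b "\<lambda>x. dI a b (H (Suc i)) x - dI a b (H i) x"] D0(3) D1(3)
    by (auto intro: continuous_intros)
  show thesis
  proof (rule that[of "C + C'"])
    fix s t :: real
    have C0: "\<forall>x\<in>{a..b}. \<bar>lin_interp H i s x - lin_interp H i t x\<bar> \<le> \<bar>s - t\<bar> * C"
    proof
      fix x assume "x \<in> {a..b}"
      moreover have "lin_interp H i s x - lin_interp H i t x = (s - t) * (H (Suc i) x - H i x)"
        by (simp add: lin_interp_def algebra_simps)
      ultimately show "\<bar>lin_interp H i s x - lin_interp H i t x\<bar> \<le> \<bar>s - t\<bar> * C"
        using C by (simp add: abs_mult mult_left_mono)
    qed
    have C1: "\<forall>x\<in>{a..b}. \<bar>dI a b (lin_interp H i s) x - dI a b (lin_interp H i t) x\<bar> \<le> \<bar>s - t\<bar> * C'"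
    proof
      fix x assume x: "x \<in> {a..b}"
      have "dI a b (lin_interp H i s) x - dI a b (lin_interp H i t) x
          = (s - t) * (dI a b (H (Suc i)) x - dI a b (H i) x)"
        unfolding lin_interp_def dI_convex_comb[OF assms(1) assms(2) assms(2) x]
        by (simp add: algebra_simps)
      then show "\<bar>dI a b (lin_interp H i s) x - dI a b (lin_interp H i t) x\<bar> \<le> \<bar>s - t\<bar> * C'"
        using C' x by (simp add: abs_mult mult_left_mono)
    qed
    from c1dist_le[OF _ C0 C1] assms(1)
    show "0 \<le> c1dist a b (lin_interp H i s) (lin_interp H i t)
        \<and> c1dist a b (lin_interp H i s) (lin_interp H i t) \<le> (C + C') * \<bar>s - t\<bar>"
      by (simp add: algebra_simps)
  qed
qed

lemma pl_path_lipschitz_on_piece: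
  assumes "a < b" "\<And>n. H n \<in> Diff1p a b"
  obtains M where "\<And>u v. u \<in> {real i..real i + 1} \<Longrightarrow> v \<in> {real i..real i + 1} \<Longrightarrow>
     0 \<le> c1dist a b (pl_path H v) (pl_path H u) \<and> c1dist a b (pl_path H v) (pl_path H u) \<le> M * \<bar>v - u\<bar>"
proof -
  obtain M where M: "\<And>s t. 0 \<le> c1dist a b (lin_interp H i s) (lin_interp H i t)
     \<and> c1dist a b (lin_interp H i s) (lin_interp H i t) \<le> M * \<bar>s - t\<bar>"
    using c1dist_lin_interp_le[where H=H and i=i, OF assms] by blast
  show thesis
  proof (rule that[of M])
    fix u v assume "u \<in> {real i..real i + 1}" "v \<in> {real i..real i + 1}"
    then show "0 \<le> c1dist a b (pl_path H v) (pl_path H u)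
        \<and> c1dist a b (pl_path H v) (pl_path H u) \<le> M * \<bar>v - u\<bar>"
      using M[of "v - real i" "u - real i"] pl_path_on_piece[of i u H] pl_path_on_piece[of i v H]
      by simp
  qed
qed

lemma shared_unit_piece:
  fixes u :: real
  assumes "0 \<le> u"
  obtains d where "0 < d" "\<And>v. 0 \<le> v \<Longrightarrow> \<bar>v - u\<bar> < d \<Longrightarrow>
    \<exists>i\<in>{nat \<lfloor>u\<rfloor> - 1, nat \<lfloor>u\<rfloor>}. u \<in> {real i..real i + 1} \<and> v \<in> {real i..real i + 1}"
proof -
  define m where "m = nat \<lfloor>u\<rfloor>"
  have mu: "real m \<le> u" "u < real m + 1" using assms unfolding m_def by linarith+
  \<comment> \<open>If u is an integer, v may lie on either of the two pieces meeting at u.\<close>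
  define d where "d = (if u = real m then 1 else min (u - real m) (real m + 1 - u))"
  show thesis
  proof (rule that[of d])
    show "0 < d" using mu by (auto simp: d_def)
    fix v assume v: "0 \<le> v" "\<bar>v - u\<bar> < d"
    show "\<exists>i\<in>{nat \<lfloor>u\<rfloor> - 1, nat \<lfloor>u\<rfloor>}. u \<in> {real i..real i + 1} \<and> v \<in> {real i..real i + 1}"
    proof (cases "real m \<le> v")
      case True
      moreover have "v \<le> real m + 1" using v(2) mu by (cases "u = real m") (auto simp: d_def)
      ultimately show ?thesis using mu by (auto simp: m_def)
    next
      case False
      have u: "u = real m"
      proof (rule ccontr)
        assume "u \<noteq> real m"
        then have "\<bar>v - u\<bar> < u - real m" using v(2) by (simp add: d_def)
        then show False using False by linarith
      qed
      moreover have "1 \<le> m" using False v(1) by linarith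
      moreover have "\<bar>v - u\<bar> < 1" using v(2) u by (simp add: d_def)
      ultimately have "u \<in> {real (m - 1)..real (m - 1) + 1} \<and> v \<in> {real (m - 1)..real (m - 1) + 1}"
        using False by simp
      then show ?thesis by (auto simp: m_def)
    qed
  qed
qed

lemma pl_path_local_lipschitz:
  assumes "a < b" "\<And>n. H n \<in> Diff1p a b" "0 \<le> u"
  obtains d M where "0 < d" "\<And>v. 0 \<le> v \<Longrightarrow> \<bar>v - u\<bar> < d \<Longrightarrow>
     0 \<le> c1dist a b (pl_path H v) (pl_path H u) \<and> c1dist a b (pl_path H v) (pl_path H u) \<le> M * \<bar>v - u\<bar>"
proof -
  define m where "m = nat \<lfloor>u\<rfloor>"
  obtain d where d: "0 < d" and piece: "\<And>v. 0 \<le> v \<Longrightarrow> \<bar>v - u\<bar> < d \<Longrightarrow>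
      \<exists>i\<in>{m - 1, m}. u \<in> {real i..real i + 1} \<and> v \<in> {real i..real i + 1}"
    using shared_unit_piece[OF assms(3)] unfolding m_def by blast
  obtain M1 where M1: "\<And>u v. u \<in> {real (m - 1)..real (m - 1) + 1} \<Longrightarrow> v \<in> {real (m - 1)..real (m - 1) + 1} \<Longrightarrow>
     0 \<le> c1dist a b (pl_path H v) (pl_path H u) \<and> c1dist a b (pl_path H v) (pl_path H u) \<le> M1 * \<bar>v - u\<bar>"
    using pl_path_lipschitz_on_piece[where H=H and i="m - 1", OF assms(1,2)] by blast
  obtain M2 where M2: "\<And>u v. u \<in> {real m..real m + 1} \<Longrightarrow> v \<in> {real m..real m + 1} \<Longrightarrow>
     0 \<le> c1dist a b (pl_path H v) (pl_path H u) \<and> c1dist a b (pl_path H v) (pl_path H u) \<le> M2 * \<bar>v - u\<bar>"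
    using pl_path_lipschitz_on_piece[where H=H and i=m, OF assms(1,2)] by blast
  show thesis
  proof (rule that[OF d])
    fix v assume "0 \<le> v" "\<bar>v - u\<bar> < d"
    then obtain i where i: "i \<in> {m - 1, m}" "u \<in> {real i..real i + 1}" "v \<in> {real i..real i + 1}"
      using piece by blast
    have "M1 * \<bar>v - u\<bar> \<le> max M1 M2 * \<bar>v - u\<bar>" "M2 * \<bar>v - u\<bar> \<le> max M1 M2 * \<bar>v - u\<bar>"
      by (simp_all add: mult_right_mono)
    moreover from i consider "i = m - 1" | "i = m" by blast
    then have "0 \<le> c1dist a b (pl_path H v) (pl_path H u) \<and>
        (c1dist a b (pl_path H v) (pl_path H u) \<le> M1 * \<bar>v - u\<bar>
          \<or> c1dist a b (pl_path H v) (pl_path H u) \<le> M2 * \<bar>v - u\<bar>)"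
      by cases (use M1[of u v] M2[of u v] i(2,3) in simp_all)
    ultimately show "0 \<le> c1dist a b (pl_path H v) (pl_path H u)
        \<and> c1dist a b (pl_path H v) (pl_path H u) \<le> max M1 M2 * \<bar>v - u\<bar>"
      by linarith
  qed
qed

lemma tendsto_c1dist_pl_path:
  assumes "a < b" "\<And>n. H n \<in> Diff1p a b" "0 \<le> u"
    and "(f \<longlongrightarrow> u) F" "eventually (\<lambda>x. 0 \<le> f x) F"
  shows "((\<lambda>x. c1dist a b (pl_path H (f x)) (pl_path H u)) \<longlongrightarrow> 0) F"
proof -
  obtain d M where d: "0 < d" and lip: "\<And>v. 0 \<le> v \<Longrightarrow> \<bar>v - u\<bar> < d \<Longrightarrow>
     0 \<le> c1dist a b (pl_path H v) (pl_path H u) \<and> c1dist a b (pl_path H v) (pl_path H u) \<le> M * \<bar>v - u\<bar>"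
    using pl_path_local_lipschitz[where H=H, OF assms(1-3)] by blast
  have "eventually (\<lambda>x. norm (c1dist a b (pl_path H (f x)) (pl_path H u)) \<le> M * \<bar>f x - u\<bar>) F"
    using assms(5) tendstoD[OF assms(4) d]
  proof eventually_elim
    case (elim x)
    then show ?case using lip[of "f x"] by (simp add: dist_real_def)
  qed
  moreover have "((\<lambda>x. M * \<bar>f x - u\<bar>) \<longlongrightarrow> 0) F"
    using tendsto_mult_left[OF tendsto_rabs[OF tendsto_diff[OF assms(4) tendsto_const]], of M u] by simp
  ultimately show ?thesis by (rule Lim_null_comparison)
qed

lemma tendsto_c1dist_conjI_pl_path:
  assumes "a < b" "\<And>n. H n \<in> Diff1p a b" "g \<in> Diff1p a b"
    and "(\<lambda>n. c1dist a b (conjI a b (H n) g) id) \<longlonglongrightarrow> 0" and "filterlim f at_top F"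
  shows "((\<lambda>x. c1dist a b (conjI a b (pl_path H (f x)) g) id) \<longlongrightarrow> 0) F"
proof (rule Lim_null_comparison)
  define e where "e n = c1dist a b (conjI a b (H n) g) id" for n
  have "(\<lambda>n. e n + e (Suc n)) \<longlonglongrightarrow> 0"
    using tendsto_add[OF assms(4) LIMSEQ_Suc[OF assms(4)]] by (simp add: e_def)
  moreover have "filterlim (\<lambda>x. nat \<lfloor>f x\<rfloor>) sequentially F"
    by (rule filterlim_compose[OF filterlim_nat_sequentially
          filterlim_compose[OF filterlim_floor_sequentially assms(5)]])
  ultimately show "((\<lambda>x. e (nat \<lfloor>f x\<rfloor>) + e (Suc (nat \<lfloor>f x\<rfloor>))) \<longlongrightarrow> 0) F"
    by (rule filterlim_compose)
  have "eventually (\<lambda>x. 0 \<le> f x) F"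
    using assms(5) by (simp add: filterlim_at_top)
  then show "eventually (\<lambda>x. norm (c1dist a b (conjI a b (pl_path H (f x)) g) id)
      \<le> e (nat \<lfloor>f x\<rfloor>) + e (Suc (nat \<lfloor>f x\<rfloor>))) F"
  proof eventually_elim
    case (elim x)
    then show ?case using c1dist_conjI_pl_path_le[where H=H, OF assms(1-3) elim] by (simp add: e_def)
  qed
qed

theorem theoremt:
  fixes a b :: real and G :: "(real \<Rightarrow> real) set"
  assumes "a < b" and "is_subgroup_Diff1p a b G"
  shows "(\<exists>h :: real \<Rightarrow> real \<Rightarrow> real.
            (\<forall>t\<in>{0..<1}. h t \<in> Diff1p a b)
          \<and> (\<forall>t\<in>{0..<1}. ((\<lambda>s. c1dist a b (h s) (h t)) \<longlongrightarrow> 0) (at t within {0..<1}))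
          \<and> (\<forall>g\<in>G. ((\<lambda>t. c1dist a b (conjI a b (h t) g) id) \<longlongrightarrow> 0) (at_left 1)))
     \<longleftrightarrow>
         (\<exists>h :: nat \<Rightarrow> real \<Rightarrow> real.
            (\<forall>n. h n \<in> Diff1p a b)
          \<and> (\<forall>g\<in>G. (\<lambda>n. c1dist a b (conjI a b (h n) g) id) \<longlonglongrightarrow> 0))"
    (is "?path \<longleftrightarrow> ?seq")
proof
  assume ?path
  then obtain h :: "real \<Rightarrow> real \<Rightarrow> real" where h: "\<forall>t\<in>{0..<1}. h t \<in> Diff1p a b"
    and conj: "\<forall>g\<in>G. ((\<lambda>t. c1dist a b (conjI a b (h t) g) id) \<longlongrightarrow> 0) (at_left 1)" by blast
  define t where "t n = 1 - inverse (real (Suc n))" for n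
  have "t n \<in> {0..<1}" for n by (simp add: t_def field_simps)
  moreover have "filterlim t (at_left 1) sequentially" unfolding t_def by real_asymp
  ultimately show ?seq
    using h conj by (intro exI[of _ "\<lambda>n. h (t n)"]) (auto dest: filterlim_compose)
next
  assume ?seq
  then obtain H :: "nat \<Rightarrow> real \<Rightarrow> real" where H: "\<And>n. H n \<in> Diff1p a b"
    and conj: "\<forall>g\<in>G. (\<lambda>n. c1dist a b (conjI a b (H n) g) id) \<longlonglongrightarrow> 0" by blast
  have G: "G \<subseteq> Diff1p a b" using assms(2) by (simp add: is_subgroup_Diff1p_def)
  have V: "filterlim (\<lambda>t::real. t / (1 - t)) at_top (at_left 1)" by real_asymp
  show ?path
  proof (intro exI[of _ "\<lambda>t. pl_path H (t / (1 - t))"] conjI ballI)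
    fix t :: real assume "t \<in> {0..<1}"
    then show "pl_path H (t / (1 - t)) \<in> Diff1p a b" by (intro pl_path_Diff1p[OF assms(1) H]) simp
  next
    fix t :: real assume t: "t \<in> {0..<1}"
    show "((\<lambda>s. c1dist a b (pl_path H (s / (1 - s))) (pl_path H (t / (1 - t)))) \<longlongrightarrow> 0)
        (at t within {0..<1})"
      using t by (intro tendsto_c1dist_pl_path[OF assms(1) H]) (auto intro!: tendsto_intros
          simp: eventually_at_filter)
  next
    fix g assume "g \<in> G"
    then show "((\<lambda>t. c1dist a b (conjI a b (pl_path H (t / (1 - t))) g) id) \<longlongrightarrow> 0) (at_left 1)"
      using G conj by (intro tendsto_c1dist_conjI_pl_path[OF assms(1) H _ _ V]) auto
  qed
qed

end
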